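(* Consider the algorithm described in the context, suppose it does not terminate finitely, and suppose there is $\sigma_{\min}>0$ with $\sigma_{\min}(J_k)\ge\sigma_{\min}$ for all $k\in\mathbb{N}$. Then the Lagrange multiplier estimate sequence $\{y_k\}$ is bounded.
   Context: Problem: $\min_{x\in\mathbb{R}^n} f(x)+r(x)$ subject to $c(x)=0$, where $f:\mathbb{R}^n\to\mathbb{R}$ and $c:\mathbb{R}^n\to\mathbb{R}^m$ ($m\le n$) are continuously differentiable and $r:\mathbb{R}^n\to\mathbb{R}_{\ge 0}$ is convex. Write $g(x)=\nabla f(x)$, $J(x)=\nabla c(x)^T$, and $f_k=f(x_k)$, $g_k=g(x_k)$, $c_k=c(x_k)$, $J_k=J(x_k)$, $r_k=r(x_k)$. All norms are Euclidean. Merit function: $\Phi_\tau(x)=\tau(f(x)+r(x))+\|c(x)\|_2$. Algorithm: inputs $x_0$, $\alpha_0>0$, $\tau_{-1}>0$; constants $\kappa_v>0$, $\sigma_c,\epsilon_\tau,\xi,\eta\in(0,1)$, $\sigma_u\in(0,1/2]$, $\bar\sigma_u:=\sigma_u+\tfrac12$. For $k=0,1,\dots$: 1. If $J_k^Tc_k\ne0$, compute $v_k$ with $v_k\in\mathrm{Range}(J_k^T)$, $\|v_k\|_2\le\kappa_v\alpha_k\|J_k^Tc_k\|_2$, $\|c_k+J_kv_k\|_2\le\|c_k+J_kv_k^c\|_2$, where $v_k^c=-\beta_k^cJ_k^Tc_k$ with $\beta_k^c$ minimizing $\tfrac12\|c_k-\beta J_kJ_k^Tc_k\|_2^2$ over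 $0\le\beta\le\kappa_v\alpha_k$. Otherwise set $v_k=0$, and if $c_k\ne0$ terminate. 2. Let $u_k$ be the unique minimizer of $g_k^Tu+\tfrac1{2\alpha_k}\|u\|_2^2+r(x_k+v_k+u)$ subject to $J_ku=0$; set $s_k=v_k+u_k$. If $s_k=0$, terminate. By the optimality conditions there exist $g_{r,k}\in\partial r(x_k+s_k)$ and $y_k\in\mathbb{R}^m$ with $g_k+\tfrac1{\alpha_k}u_k+g_{r,k}-J_k^Ty_k=0$; $g_{r,k},y_k$ denote such vectors ($y_k$ is the Lagrange multiplier estimate). 3. Let $D_k:=g_k^Ts_k+\bar\sigma_u\|s_k\|_2^2/\alpha_k+r(x_k+s_k)-r_k$; $\tau_{k,\mathrm{trial}}=\infty$ if $D_k\le0$, else $\tau_{k,\mathrm{trial}}=(1-\sigma_c)(\|c_k\|_2-\|c_k+J_kv_k\|_2)/D_k$. Set $\tau_k=\tau_{k-1}$ if $\tau_{k-1}\le\tau_{k,\mathrm{trial}}$, else $\tau_k=\min\{(1-\epsilon_\tau)\tau_{k-1},\tau_{k,\mathrm{trial}}\}$. 4. With $\Delta q_k(s,\tau):=-\tau(g_k^Ts+\tfrac1{2\alpha_k}\|s\|_2^2+r(x_k+s)-r_k)+\|c_k\|_2-\|c_k+J_ks\|_2$: if $\Phi_{\tau_k}(x_k+s_k)\le\Phi_{\tau_k}(x_k)-\eta\Delta q_k(s_k,\tau_k)$ set $x_{k+1}=x_k+s_k$, $\alpha_{k+1}=\alpha_k$; else $x_{k+1}=x_k$, $\alpha_{k+1}=\xi\alpha_k$.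 Standing assumption: there is an open convex set $\mathcal X$ containing all iterates $x_k$ and trial points $x_k+s_k$ such that $f$ is bounded below on $\mathcal X$, $\nabla f$ is bounded and Lipschitz continuous on $\mathcal X$, $c$ is bounded on $\mathcal X$, $J$ is bounded and Lipschitz continuous on $\mathcal X$, and all subgradients of $r$ at points of $\mathcal X$ are uniformly bounded in norm. *)

theory Defs
  imports "HOL-Analysis.Analysis"
begin

definition subgrad :: "(real^'n \<Rightarrow> real) \<Rightarrow> real^'n \<Rightarrow> (real^'n) set" where
  "subgrad r z = {q. \<forall>w. r w \<ge> r z + q \<bullet> (w - z)}"

text \<open>Smallest singular value of an m x n matrix A with m \<le> n (the m-th singular value),
  i.e. the minimum of norm (A^T w) over unit vectors w in R^m.\<close>
definition sigma_min :: "real^'n^'m \<Rightarrow> real" where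
  "sigma_min A = Inf {norm (transpose A *v w) | w. norm w = 1}"

definition merit :: "(real^'n \<Rightarrow> real) \<Rightarrow> (real^'n \<Rightarrow> real) \<Rightarrow> (real^'n \<Rightarrow> real^'m)
    \<Rightarrow> real \<Rightarrow> real^'n \<Rightarrow> real" where
  "merit f r c tau z = tau * (f z + r z) + norm (c z)"

definition delta_q :: "(real^'n \<Rightarrow> real) \<Rightarrow> real^'n \<Rightarrow> real \<Rightarrow> real^'n \<Rightarrow> real^'m
    \<Rightarrow> real^'n^'m \<Rightarrow> real^'n \<Rightarrow> real \<Rightarrow> real" where
  "delta_q r xk alpha gk ck Jk s tau =
     - tau * (gk \<bullet> s + (1 / (2 * alpha)) * (norm s)^2 + r (xk + s) - r xk)
     + norm ck - norm (ck + Jk *v s)"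

definition sub_obj :: "(real^'n \<Rightarrow> real) \<Rightarrow> real^'n \<Rightarrow> real \<Rightarrow> real^'n \<Rightarrow> real^'n
    \<Rightarrow> real^'n \<Rightarrow> real" where
  "sub_obj r xk alpha gk vk u = gk \<bullet> u + (1 / (2 * alpha)) * (norm u)^2 + r (xk + vk + u)"

end

theory Submission
  imports Defs
begin

text \<open>The tangential step u_k lies in the null space of J_k, so pairing the stationarity condition
  g_k + u_k/alpha_k + g_r,k = J_k^T y_k with u_k kills the multiplier term. Hence u_k/alpha_k is
  orthogonal to g_k + g_r,k + u_k/alpha_k, and therefore no longer than g_k + g_r,k, which the standing
  assumption bounds uniformly. This bounds J_k^T y_k, and the uniform lower bound on the smallest
  singular value of J_k transfers the bound to y_k.\<close>

lemma norm_le_if_orthogonal_add: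
  fixes a w :: "'a::real_inner"
  assumes "orthogonal (a + w) w"
  shows "norm w \<le> norm a"
proof -
  have "orthogonal (a + w) (- w)"
    using assms by (simp add: orthogonal_clauses)
  then have "(norm a)\<^sup>2 = (norm (a + w))\<^sup>2 + (norm w)\<^sup>2"
    using norm_add_Pythagorean[of "a + w" "- w"] by simp
  then have "(norm w)\<^sup>2 \<le> (norm a)\<^sup>2"
    using zero_le_power2[of "norm (a + w)"] by linarith
  then show ?thesis
    using power2_le_imp_le norm_ge_zero by blast
qed

lemma sigma_min_mult_norm_le:
  fixes A :: "real^'n^'m"
  shows "sigma_min A * norm w \<le> norm (transpose A *v w)"
proof (cases "w = 0")
  case False
  define e where "e = (1 / norm w) *\<^sub>R w"
  have "norm e = 1"
    using False by (simp add: e_def)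
  then have "sigma_min A \<le> norm (transpose A *v e)"
    unfolding sigma_min_def
    by (intro cInf_lower bdd_belowI[where m = 0]) (auto simp del: transpose_matrix_vector)
  also have "\<dots> = norm (transpose A *v w) / norm w"
    by (simp add: e_def matrix_vector_mult_scaleR divide_inverse_commute)
  finally show ?thesis
    using False by (simp add: pos_le_divide_eq)
qed simp

lemma norm_transpose_mult_le_if_stationary:
  fixes A :: "real^'n^'m"
  assumes null: "A *v u = 0"
    and stationary: "a + t *\<^sub>R u - transpose A *v y = 0"
  shows "norm (transpose A *v y) \<le> 2 * norm a"
proof -
  have Aty: "transpose A *v y = a + t *\<^sub>R u"
    using stationary by (simp add: algebra_simps)
  have "(a + t *\<^sub>R u) \<bullet> u = 0"
    by (simp flip: Aty add: dot_lmul_matrix null)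
  then have "orthogonal (a + t *\<^sub>R u) (t *\<^sub>R u)"
    by (simp add: orthogonal_def)
  then have "norm (t *\<^sub>R u) \<le> norm a"
    by (rule norm_le_if_orthogonal_add)
  then show ?thesis
    unfolding Aty using norm_triangle_ineq[of a "t *\<^sub>R u"] by linarith
qed

lemma norm_multiplier_le:
  fixes A :: "real^'n^'m"
  assumes "A *v u = 0"
    and "a + t *\<^sub>R u - transpose A *v y = 0"
    and "sigma_min A \<ge> \<sigma>" and "\<sigma> > 0"
  shows "norm y \<le> 2 * norm a / \<sigma>"
proof -
  have "\<sigma> * norm y \<le> sigma_min A * norm y"
    using assms(3) by (simp add: mult_right_mono)
  also have "\<dots> \<le> norm (transpose A *v y)"
    by (rule sigma_min_mult_norm_le)
  also have "\<dots> \<le> 2 * norm a"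
    using assms(1,2) by (rule norm_transpose_mult_le_if_stationary)
  finally show ?thesis
    using \<open>\<sigma> > 0\<close> by (simp add: pos_le_divide_eq mult.commute)
qed

theorem lemma3p17:
  fixes f :: "real^'n \<Rightarrow> real" and r :: "real^'n \<Rightarrow> real"
    and c :: "real^'n \<Rightarrow> real^'m" and g :: "real^'n \<Rightarrow> real^'n"
    and J :: "real^'n \<Rightarrow> real^'n^'m"
    and x v u s gr :: "nat \<Rightarrow> real^'n" and y :: "nat \<Rightarrow> real^'m"
    and alpha tau :: "nat \<Rightarrow> real"
    and tau_init kappa_v sigma_c eps_tau xi eta sigma_u sigma_min_bd :: real
  assumes dims: "CARD('m) \<le> CARD('n)"
    \<comment> \<open>problem data\<close>
    and f_deriv: "\<And>z. (f has_derivative (\<lambda>d. g z \<bullet> d)) (at z)"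
    and g_cont: "continuous_on UNIV g"
    and c_deriv: "\<And>z. (c has_derivative (\<lambda>d. J z *v d)) (at z)"
    and J_cont: "continuous_on UNIV J"
    and r_convex: "convex_on UNIV r" and r_nonneg: "\<And>z. r z \<ge> 0"
    \<comment> \<open>algorithm constants and inputs\<close>
    and alpha0: "alpha 0 > 0" and tau_init: "tau_init > 0"
    and kappa_v: "kappa_v > 0"
    and sigma_c: "0 < sigma_c" "sigma_c < 1"
    and eps_tau: "0 < eps_tau" "eps_tau < 1"
    and xi: "0 < xi" "xi < 1"
    and eta: "0 < eta" "eta < 1"
    and sigma_u: "0 < sigma_u" "sigma_u \<le> 1/2"
    \<comment> \<open>Step 1 (with non-termination: if J_k^T c_k = 0 then c_k = 0)\<close>
    and step1_nz: "\<And>k. transpose (J (x k)) *v c (x k) \<noteq> 0 \<Longrightarrow>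
         (\<exists>w. v k = transpose (J (x k)) *v w)
       \<and> norm (v k) \<le> kappa_v * alpha k * norm (transpose (J (x k)) *v c (x k))
       \<and> (\<exists>bc. 0 \<le> bc \<and> bc \<le> kappa_v * alpha k
            \<and> (\<forall>b. 0 \<le> b \<and> b \<le> kappa_v * alpha k \<longrightarrow>
                 (1/2) * (norm (c (x k) - bc *s (J (x k) *v (transpose (J (x k)) *v c (x k)))))^2
                 \<le> (1/2) * (norm (c (x k) - b *s (J (x k) *v (transpose (J (x k)) *v c (x k)))))^2)
            \<and> norm (c (x k) + J (x k) *v v k)
                \<le> norm (c (x k) + J (x k) *v (- bc *s (transpose (J (x k)) *v c (x k)))))"
    and step1_z: "\<And>k. transpose (J (x k)) *v c (x k) = 0 \<Longrightarrow> v k = 0 \<and> c (x k) = 0"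
    \<comment> \<open>Step 2 (with non-termination: s_k \<noteq> 0)\<close>
    and step2_u: "\<And>k. J (x k) *v u k = 0 \<and>
         (\<forall>w. J (x k) *v w = 0 \<longrightarrow>
              sub_obj r (x k) (alpha k) (g (x k)) (v k) (u k)
              \<le> sub_obj r (x k) (alpha k) (g (x k)) (v k) w)"
    and step2_s: "\<And>k. s k = v k + u k"
    and nonterm: "\<And>k. s k \<noteq> 0"
    and step2_mult: "\<And>k. gr k \<in> subgrad r (x k + s k)
         \<and> g (x k) + (1 / alpha k) *\<^sub>R u k + gr k - transpose (J (x k)) *v y k = 0"
    \<comment> \<open>Step 3: merit parameter update (tau k is tau_k, tau_{-1} = tau_init)\<close>
    and step3: "\<And>k. let tprev = (if k = 0 then tau_init else tau (k - 1));
           D = g (x k) \<bullet> s k + (sigma_u + 1/2) * (norm (s k))^2 / alpha k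
               + r (x k + s k) - r (x k);
           ttrial = (1 - sigma_c) * (norm (c (x k)) - norm (c (x k) + J (x k) *v v k)) / D
         in tau k = (if D \<le> 0 \<or> tprev \<le> ttrial then tprev
                     else min ((1 - eps_tau) * tprev) ttrial)"
    \<comment> \<open>Step 4: acceptance test\<close>
    and step4: "\<And>k. if merit f r c (tau k) (x k + s k)
                 \<le> merit f r c (tau k) (x k)
                    - eta * delta_q r (x k) (alpha k) (g (x k)) (c (x k)) (J (x k)) (s k) (tau k)
               then x (Suc k) = x k + s k \<and> alpha (Suc k) = alpha k
               else x (Suc k) = x k \<and> alpha (Suc k) = xi * alpha k"
    \<comment> \<open>standing assumption\<close>
    and standing: "\<exists>X. open X \<and> convex X \<and> (\<forall>k. x k \<in> X \<and> x k + s k \<in> X)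
         \<and> bdd_below (f ` X) \<and> bounded (g ` X) \<and> (\<exists>L. L-lipschitz_on X g)
         \<and> bounded (c ` X) \<and> bounded (J ` X) \<and> (\<exists>L. L-lipschitz_on X J)
         \<and> (\<exists>B. \<forall>z\<in>X. \<forall>q\<in>subgrad r z. norm q \<le> B)"
    \<comment> \<open>uniform lower bound on the smallest singular value of J_k\<close>
    and sigma_pos: "sigma_min_bd > 0"
    and sigma_bd: "\<And>k. sigma_min (J (x k)) \<ge> sigma_min_bd"
  shows "bounded (range y)"
proof -
  obtain X where X: "\<forall>k. x k \<in> X \<and> x k + s k \<in> X" "bounded (g ` X)"
      "\<exists>B. \<forall>z\<in>X. \<forall>q\<in>subgrad r z. norm q \<le> B"
    using standing by blast
  obtain G where G: "\<And>z. z \<in> X \<Longrightarrow> norm (g z) \<le> G"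
    using X(2) unfolding bounded_iff by blast
  obtain B where B: "\<And>z q. z \<in> X \<Longrightarrow> q \<in> subgrad r z \<Longrightarrow> norm q \<le> B"
    using X(3) by blast
  have "norm (y k) \<le> 2 * (G + B) / sigma_min_bd" for k
  proof -
    have stationary: "g (x k) + gr k + (1 / alpha k) *\<^sub>R u k - transpose (J (x k)) *v y k = 0"
      using step2_mult[of k] by (simp add: algebra_simps)
    have "norm (y k) \<le> 2 * norm (g (x k) + gr k) / sigma_min_bd"
      using step2_u[of k] by (intro norm_multiplier_le[OF _ stationary sigma_bd sigma_pos]) simp
    also have "\<dots> \<le> 2 * (G + B) / sigma_min_bd"
    proof -
      have "norm (g (x k)) \<le> G" "norm (gr k) \<le> B"
        using G B X(1) step2_mult by blast+
      then show ?thesis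
        using norm_triangle_ineq[of "g (x k)" "gr k"] sigma_pos by (simp add: divide_right_mono)
    qed
    finally show ?thesis .
  qed
  then show ?thesis
    unfolding bounded_iff by blast
qed

end
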